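(* Let $n\ge1$, $p \in [0,1/2]$, $q=1-p$, and for $r\ge0$ let $\mu_r = \mathbb{E}(X-np)^r$ where $X\sim\mathrm{Bin}(n,p)$. Define polynomials $\nu_r(x)$ recursively by $\nu_0 = 1$, $\nu_1 = 0$ and, for $r\ge2$, \[ \nu_r(x) = x \sum_{j=0}^{r-2} \binom{r-1}{j} \nu_j(x). \] Then $\mu_r \leq \nu_r(npq)$ for every $r\ge0$. *)

theory Defs
  imports "HOL-Probability.Probability"
begin

function nu :: "nat \<Rightarrow> real \<Rightarrow> real" where
  "nu r x = (if r = 0 then 1 else if r = 1 then 0
             else x * (\<Sum>j = 0..r - 2. real ((r - 1) choose j) * nu j x))"
  by auto
termination
  by (relation "Wellfounded.measure fst") auto

definition binom_central_moment :: "nat \<Rightarrow> real \<Rightarrow> nat \<Rightarrow> real" where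
  "binom_central_moment n p r =
     measure_pmf.expectation (binomial_pmf n p) (\<lambda>k. (real k - real n * p) ^ r)"

end

theory Submission
  imports Defs "HOL-Computational_Algebra.Formal_Power_Series"
begin

text \<open>
  \<open>nu r x\<close> is the \<open>r\<close>-th central moment of the Poisson distribution with mean \<open>x\<close>: its
  exponential generating function is \<open>exp (x (e\<^sup>t - 1 - t))\<close>. Hence \<open>nu r (x + y)\<close> is the
  binomial convolution of \<open>nu \<cdot> x\<close> and \<open>nu \<cdot> y\<close>. Since \<open>Bin(n+1,p)\<close> is \<open>Bin(n,p)\<close> plus an
  independent Bernoulli variable, its central moments are the binomial convolution of those of
  \<open>Bin(n,p)\<close> and of \<open>Bernoulli(p)\<close>, and the \<open>k\<close>-th central moment of \<open>Bernoulli(p)\<close> has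
  absolute value at most \<open>pq \<le> nu k (pq)\<close> for \<open>k \<ge> 2\<close>. Induction on \<open>n\<close> then bounds
  \<open>|\<mu>\<^sub>r|\<close> by \<open>nu r (npq)\<close>.
\<close>

unbundle no vec_syntax
notation fps_nth (infixl \<open>$\<close> 75)

declare nu.simps [simp del]

lemma nu_0 [simp]: "nu 0 x = 1"
  by (subst nu.simps) simp

lemma nu_Suc: "nu (Suc r) x = x * (\<Sum>j<r. real (r choose j) * nu j x)"
proof (cases r)
  case 0
  then show ?thesis by (subst nu.simps) simp
next
  case (Suc m)
  have "{0..Suc r - 2} = {..<r}" using Suc by auto
  then show ?thesis using Suc by (subst nu.simps) simp
qed

lemma nu_1 [simp]: "nu (Suc 0) x = 0"
  by (simp add: nu_Suc)

lemma nu_nonneg: "x \<ge> 0 \<Longrightarrow> nu r x \<ge> 0"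
proof (induction r rule: less_induct)
  case (less r)
  show ?case
  proof (cases r)
    case (Suc m)
    then show ?thesis
      using less by (auto simp: nu_Suc intro!: mult_nonneg_nonneg sum_nonneg)
  qed simp
qed

lemma le_nu:
  assumes "x \<ge> 0" "r \<ge> 2"
  shows "x \<le> nu r x"
proof -
  obtain m where m: "r = Suc m" "m \<ge> 1" using assms by (cases r) auto
  have "real (m choose 0) * nu 0 x \<le> (\<Sum>j<m. real (m choose j) * nu j x)"
    by (rule member_le_sum) (use m assms nu_nonneg in auto)
  then have "1 \<le> (\<Sum>j<m. real (m choose j) * nu j x)" by simp
  then show ?thesis using m assms by (simp add: nu_Suc mult_le_cancel_left1)
qed

definition nu_egf :: "real \<Rightarrow> real fps" where
  "nu_egf x = Abs_fps (\<lambda>r. nu r x / fact r)"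

lemma nu_egf_nth [simp]: "nu_egf x $ r = nu r x / fact r"
  by (simp add: nu_egf_def)

lemma fps_linear_ode_unique:
  fixes f g h :: "'a::field_char_0 fps"
  assumes "fps_deriv f = h * f" "fps_deriv g = h * g" "f $ 0 = g $ 0"
  shows "f = g"
proof -
  have "\<forall>k\<le>m. f $ k = g $ k" for m
  proof (induction m)
    case 0
    then show ?case using assms by simp
  next
    case (Suc m)
    have "fps_deriv f $ m = fps_deriv g $ m"
      unfolding assms(1,2) fps_mult_nth using Suc by (intro sum.cong) auto
    then have "f $ Suc m = g $ Suc m" by (simp del: of_nat_Suc)
    then show ?case using Suc le_Suc_eq by auto
  qed
  then show ?thesis by (intro fps_ext) auto
qed

lemma fps_deriv_nu_egf: "fps_deriv (nu_egf x) = fps_const x * (fps_exp 1 - 1) * nu_egf x"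
proof (rule fps_ext)
  fix n
  have "(nu_egf x * (fps_exp 1 - 1)) $ n
      = (\<Sum>i=0..n. nu i x / fact i * (if n - i = 0 then 0 else 1 / fact (n - i)))"
    by (simp add: fps_mult_nth) (intro sum.cong, auto)
  also have "\<dots> = (\<Sum>i<n. nu i x / fact i * (1 / fact (n - i)))"
  proof -
    have "{0..n} = insert n {..<n}" by auto
    then show ?thesis by (simp add: sum.insert mult.commute)
  qed
  also have "\<dots> = (\<Sum>i<n. real (n choose i) * nu i x) / fact n"
    unfolding sum_divide_distrib
    by (intro sum.cong) (auto simp: binomial_fact field_simps)
  finally have conv: "(nu_egf x * (fps_exp 1 - 1)) $ n
      = (\<Sum>i<n. real (n choose i) * nu i x) / fact n" .
  have "fps_deriv (nu_egf x) $ n = real (Suc n) * (nu (Suc n) x / (real (Suc n) * fact n))"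
    unfolding fps_deriv_nth nu_egf_nth fact_Suc by simp
  also have "\<dots> = nu (Suc n) x / fact n"
    by (simp del: of_nat_Suc)
  also have "\<dots> = x * (nu_egf x * (fps_exp 1 - 1)) $ n"
    by (simp add: conv nu_Suc)
  also have "\<dots> = (fps_const x * (fps_exp 1 - 1) * nu_egf x) $ n"
    by (simp only: fps_mult_left_const_nth mult.assoc mult.commute[of "fps_exp 1 - 1"])
  finally show "fps_deriv (nu_egf x) $ n = (fps_const x * (fps_exp 1 - 1) * nu_egf x) $ n" .
qed

lemma nu_egf_add: "nu_egf (x + y) = nu_egf x * nu_egf y"
proof (rule fps_linear_ode_unique[where h = "fps_const (x + y) * (fps_exp 1 - 1)"])
  show "fps_deriv (nu_egf (x + y)) = fps_const (x + y) * (fps_exp 1 - 1) * nu_egf (x + y)"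
    by (rule fps_deriv_nu_egf)
  show "fps_deriv (nu_egf x * nu_egf y)
      = fps_const (x + y) * (fps_exp 1 - 1) * (nu_egf x * nu_egf y)"
    by (simp add: fps_deriv_nu_egf algebra_simps flip: fps_const_add)
qed simp

lemma nu_add: "nu r (x + y) = (\<Sum>j\<le>r. real (r choose j) * nu j x * nu (r - j) y)"
proof -
  have "nu r (x + y) / fact r = (nu_egf x * nu_egf y) $ r"
    by (simp flip: nu_egf_add)
  also have "\<dots> = (\<Sum>j\<le>r. nu j x / fact j * (nu (r - j) y / fact (r - j)))"
    by (simp add: fps_mult_nth atLeast0AtMost)
  also have "\<dots> = (\<Sum>j\<le>r. real (r choose j) * nu j x * nu (r - j) y) / fact r"
    unfolding sum_divide_distrib
    by (intro sum.cong) (auto simp: binomial_fact field_simps)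
  finally show ?thesis by (simp add: field_simps)
qed

definition binomial_expect :: "nat \<Rightarrow> real \<Rightarrow> (nat \<Rightarrow> real) \<Rightarrow> real" where
  "binomial_expect n p f = (\<Sum>k\<le>n. real (n choose k) * p ^ k * (1 - p) ^ (n - k) * f k)"

lemma binom_central_moment_eq_binomial_expect:
  assumes "0 \<le> p" "p \<le> 1"
  shows "binom_central_moment n p r = binomial_expect n p (\<lambda>k. (real k - real n * p) ^ r)"
  unfolding binom_central_moment_def binomial_expect_def
  using assms by (subst expectation_binomial_pmf') auto

text \<open>Conditioning on the last of \<open>n + 1\<close> Bernoulli trials.\<close>

lemma binomial_expect_Suc:
  "binomial_expect (Suc n) p f
     = p * binomial_expect n p (\<lambda>k. f (Suc k)) + (1 - p) * binomial_expect n p f"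
proof -
  let ?q = "1 - p"
  let ?g = "\<lambda>k. real (n choose k) * p ^ k * ?q ^ (Suc n - k) * f k"
  let ?tail = "\<Sum>k\<le>n. real (n choose Suc k) * p ^ Suc k * ?q ^ (n - k) * f (Suc k)"
  have split: "binomial_expect (Suc n) p f = ?q ^ Suc n * f 0 +
     (\<Sum>k\<le>n. real (n choose k) * p ^ Suc k * ?q ^ (n - k) * f (Suc k)) + ?tail"
    unfolding binomial_expect_def
    by (subst sum.atMost_Suc_shift) (simp add: sum.distrib algebra_simps)
  have success: "(\<Sum>k\<le>n. real (n choose k) * p ^ Suc k * ?q ^ (n - k) * f (Suc k))
      = p * binomial_expect n p (\<lambda>k. f (Suc k))"
    unfolding binomial_expect_def sum_distrib_left by (intro sum.cong) auto
  have "?q ^ Suc n * f 0 + ?tail = (\<Sum>k\<le>Suc n. ?g k)"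
    by (subst sum.atMost_Suc_shift) simp
  also have "\<dots> = (\<Sum>k\<le>n. ?g k)" by simp
  also have "\<dots> = ?q * binomial_expect n p f"
    unfolding binomial_expect_def sum_distrib_left
    by (intro sum.cong refl) (simp add: Suc_diff_le)
  finally show ?thesis using split success by simp
qed

lemma binomial_expect_sum:
  "binomial_expect n p (\<lambda>k. \<Sum>j\<in>A. g j k) = (\<Sum>j\<in>A. binomial_expect n p (g j))"
  unfolding binomial_expect_def sum_distrib_left by (subst sum.swap) (simp add: ac_simps)

lemma binomial_expect_cmult: "binomial_expect n p (\<lambda>k. c * g k) = c * binomial_expect n p g"
  unfolding binomial_expect_def by (simp add: sum_distrib_left ac_simps)

lemma binomial_expect_shifted_power:
  "binomial_expect n p (\<lambda>k. (real k - real n * p + a) ^ r)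
     = (\<Sum>j\<le>r. real (r choose j) * a ^ (r - j)
                 * binomial_expect n p (\<lambda>k. (real k - real n * p) ^ j))"
  unfolding binomial_ring binomial_expect_sum
  by (intro sum.cong refl) (simp add: binomial_expect_cmult[symmetric] ac_simps)

definition bernoulli_central_moment :: "real \<Rightarrow> nat \<Rightarrow> real" where
  "bernoulli_central_moment p k = p * (1 - p) ^ k + (1 - p) * (- p) ^ k"

lemma binom_central_moment_Suc:
  assumes "0 \<le> p" "p \<le> 1"
  shows "binom_central_moment (Suc n) p r
    = (\<Sum>j\<le>r. real (r choose j) * binom_central_moment n p j * bernoulli_central_moment p (r - j))"
proof -
  let ?M = "\<lambda>j. binomial_expect n p (\<lambda>k. (real k - real n * p) ^ j)"
  have "binom_central_moment (Suc n) p r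
      = p * binomial_expect n p (\<lambda>k. (real k - real n * p + (1 - p)) ^ r)
        + (1 - p) * binomial_expect n p (\<lambda>k. (real k - real n * p + - p) ^ r)"
    using assms by (simp add: binom_central_moment_eq_binomial_expect binomial_expect_Suc
                              algebra_simps)
  also have "\<dots> = p * (\<Sum>j\<le>r. real (r choose j) * (1 - p) ^ (r - j) * ?M j)
      + (1 - p) * (\<Sum>j\<le>r. real (r choose j) * (- p) ^ (r - j) * ?M j)"
    unfolding binomial_expect_shifted_power ..
  also have "\<dots> = (\<Sum>j\<le>r. real (r choose j) * ?M j * bernoulli_central_moment p (r - j))"
    unfolding bernoulli_central_moment_def sum_distrib_left sum.distrib[symmetric]
    by (intro sum.cong) (auto simp: algebra_simps)
  finally show ?thesis
    using assms by (simp add: binom_central_moment_eq_binomial_expect)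
qed

lemma abs_bernoulli_central_moment_le:
  assumes "0 \<le> p" "p \<le> 1"
  shows "\<bar>bernoulli_central_moment p k\<bar> \<le> nu k (p * (1 - p))"
proof -
  consider "k = 0" | "k = 1" | "k \<ge> 2" by linarith
  then show ?thesis
  proof cases
    case 1
    then show ?thesis by (simp add: bernoulli_central_moment_def)
  next
    case 2
    then show ?thesis by (simp add: bernoulli_central_moment_def algebra_simps)
  next
    case 3
    then obtain m where m: "k = Suc (Suc m)" by (metis add_2_eq_Suc le_Suc_ex)
    have "\<bar>bernoulli_central_moment p k\<bar> \<le> p * (1 - p) ^ k + (1 - p) * p ^ k"
      unfolding bernoulli_central_moment_def using assms
      by (intro order_trans[OF abs_triangle_ineq] add_mono) (simp_all add: abs_mult power_abs)
    also have "\<dots> = p * (1 - p) * ((1 - p) ^ Suc m + p ^ Suc m)"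
      by (simp add: m algebra_simps)
    also have "\<dots> \<le> p * (1 - p) * ((1 - p) + p)"
      using assms by (intro mult_left_mono add_mono) (auto simp: mult_left_le power_le_one)
    also have "\<dots> \<le> nu k (p * (1 - p))"
      using 3 assms by (simp add: le_nu)
    finally show ?thesis .
  qed
qed

lemma abs_binom_central_moment_le:
  assumes "0 \<le> p" "p \<le> 1"
  shows "\<bar>binom_central_moment n p r\<bar> \<le> nu r (real n * (p * (1 - p)))"
proof (induction n arbitrary: r)
  case 0
  then show ?case
    using assms by (cases r) (simp_all add: binom_central_moment_eq_binomial_expect
                                            binomial_expect_def nu_Suc)
next
  case (Suc n)
  have pq: "0 \<le> p * (1 - p)" using assms by simp
  have "\<bar>binom_central_moment (Suc n) p r\<bar>
      \<le> (\<Sum>j\<le>r. \<bar>real (r choose j) * binom_central_moment n p j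
                   * bernoulli_central_moment p (r - j)\<bar>)"
    unfolding binom_central_moment_Suc[OF assms] by (rule sum_abs)
  also have "\<dots> \<le> (\<Sum>j\<le>r. real (r choose j) * nu j (real n * (p * (1 - p)))
                     * nu (r - j) (p * (1 - p)))"
    unfolding abs_mult
    by (intro sum_mono mult_mono Suc abs_bernoulli_central_moment_le assms)
       (auto intro!: nu_nonneg mult_nonneg_nonneg pq)
  also have "\<dots> = nu r (real n * (p * (1 - p)) + p * (1 - p))"
    by (rule nu_add[symmetric])
  also have "real n * (p * (1 - p)) + p * (1 - p) = real (Suc n) * (p * (1 - p))"
    by (simp add: algebra_simps)
  finally show ?case .
qed

theorem proposition18:
  fixes n r :: nat and p q :: real
  assumes "n \<ge> 1" and "0 \<le> p" and "p \<le> 1 / 2" and "q = 1 - p"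
  shows "binom_central_moment n p r \<le> nu r (real n * p * q)"
proof -
  have "binom_central_moment n p r \<le> \<bar>binom_central_moment n p r\<bar>" by simp
  also have "\<dots> \<le> nu r (real n * (p * (1 - p)))"
    using assms by (intro abs_binom_central_moment_le) auto
  finally show ?thesis using assms by (simp add: mult.assoc)
qed

end
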